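(* There exist a constant $c>0$ and a family of graphs $\mathcal G$ (containing an $n$-vertex graph for infinitely many $n$) such that for every $n$-vertex graph $G\in\mathcal G$ and every $\rho\ge c/\log n$, every $\rho$-dense aggregator of $G$ has size $\Omega^*\big(n^{\frac{3\log n}{8\log\log n}}\big)$.
   Context: For a graph with $n'\ge 2$ vertices and $m'$ edges its density is $m'/\binom{n'}{2}$; a one-vertex graph has density $1$. A $\rho$-dense aggregator of a graph $G$ is a collection of nonempty vertex sets $S_1,\dots,S_k$ such that every clique of $G$ is contained in some $S_i$ and each induced subgraph $G[S_i]$ has density at least $\rho$; its size is $k$. The notation $\Omega^*(\cdot)$ hides multiplicative factors that are sublinear in $n$. Logarithms are base 2. *)

theory Defs
  imports "HOL-Analysis.Analysis"
begin

type_synonym graph = "nat set \<times> nat set set"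

definition simple_graph :: "graph \<Rightarrow> bool" where
  "simple_graph G \<longleftrightarrow> finite (fst G) \<and> (\<forall>e\<in>snd G. e \<subseteq> fst G \<and> card e = 2)"

definition is_clique :: "graph \<Rightarrow> nat set \<Rightarrow> bool" where
  "is_clique G K \<longleftrightarrow> K \<subseteq> fst G \<and> (\<forall>u\<in>K. \<forall>v\<in>K. u \<noteq> v \<longrightarrow> {u, v} \<in> snd G)"

definition induced_edges :: "graph \<Rightarrow> nat set \<Rightarrow> nat" where
  "induced_edges G S = card {e \<in> snd G. e \<subseteq> S}"

definition density :: "graph \<Rightarrow> nat set \<Rightarrow> real" where
  "density G S = (if card S \<ge> 2 then real (induced_edges G S) / real (card S choose 2) else 1)"

text \<open>A rho-dense aggregator S_1,...,S_k, represented as a list (size = length).\<close>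
definition dense_aggregator :: "real \<Rightarrow> graph \<Rightarrow> nat set list \<Rightarrow> bool" where
  "dense_aggregator \<rho> G Ss \<longleftrightarrow>
     (\<forall>S\<in>set Ss. S \<noteq> {} \<and> S \<subseteq> fst G \<and> density G S \<ge> \<rho>) \<and>
     (\<forall>K. is_clique G K \<longrightarrow> (\<exists>S\<in>set Ss. K \<subseteq> S))"

end

theory Submission
  imports Defs
begin

text \<open>Colour the pairs of \<open>n = 2^a\<close> vertices uniformly with \<open>a\<close> colours and keep the
  pairs of colour \<open>0\<close>, i.e. take the random graph \<open>G(n, 1/a)\<close>. Its expected number of
  \<open>k\<close>-cliques is \<open>(n choose k) / a^(k choose 2)\<close>, while the expected number of vertex sets of
  size at least \<open>a\<^sup>2\<close> and density at least \<open>8/a\<close> is far below \<open>1/(2 a^(k choose 2))\<close>;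
  so some graph has at least half the expected number of \<open>k\<close>-cliques and no such dense set.
  In a \<open>\<rho>\<close>-dense aggregator of that graph with \<open>\<rho> \<ge> 8/a = 8/log n\<close> every set therefore
  has fewer than \<open>a\<^sup>2\<close> vertices and contains at most \<open>a\<^sup>2 choose k\<close> of the \<open>k\<close>-cliques,
  while every clique lies in one of the sets. Choosing \<open>a = j k = 2^j\<close> turns the resulting
  lower bound \<open>(n choose k) / (2 a^(k choose 2) (a\<^sup>2 choose k))\<close> into
  \<open>2^(3 a k / 8) = n^(3 log n / (8 log log n))\<close>, so the theorem holds with \<open>c = 8\<close> and
  \<open>s = 1\<close>.\<close>

lemma power_le_exp_mult_fact:
  fixes x :: real
  assumes "x \<ge> 0"
  shows "x ^ r \<le> exp x * fact r"
proof -
  have "summable (\<lambda>n. x ^ n /\<^sub>R fact n)" and exp: "exp x = (\<Sum>n. x ^ n /\<^sub>R fact n)"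
    using exp_converges[of x] by (auto simp: sums_iff)
  then have "(\<Sum>n\<in>{r}. x ^ n /\<^sub>R fact n) \<le> exp x"
    unfolding exp using assms by (intro sum_le_suminf) auto
  then show ?thesis by (simp add: divide_simps)
qed

lemma self_power_le_four_power_fact: "real r ^ r \<le> 4 ^ r * fact r"
proof -
  have "real r ^ r \<le> exp (real r) * fact r" by (rule power_le_exp_mult_fact) simp
  also have "exp (real r) = exp 1 ^ r" using exp_of_nat_mult[of r 1] by simp
  also have "\<dots> \<le> 4 ^ r" using exp_le by (intro power_mono) auto
  finally show ?thesis by (simp add: mult_right_mono)
qed

lemma binomial_mult_self_power_le: "real (M choose r) * real r ^ r \<le> (4 * real M) ^ r"
proof -
  have "real (M choose r) * real r ^ r \<le> real (M choose r) * (4 ^ r * fact r)"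
    by (intro mult_left_mono self_power_le_four_power_fact) simp
  also have "\<dots> = 4 ^ r * real ((M choose r) * fact r)" by simp
  also have "\<dots> \<le> 4 ^ r * real (M ^ r)"
    using binomial_fact_pow[of M r] by (intro mult_left_mono) (simp only: of_nat_le_iff, simp)
  finally show ?thesis by (simp add: power_mult_distrib)
qed

lemma binomial_le_half_power:
  fixes a :: real
  assumes "a \<ge> 0" and "real M \<le> a * real r / 8"
  shows "real (M choose r) \<le> (a / 2) ^ r"
proof (cases "r = 0")
  case False
  have "real (M choose r) * real r ^ r \<le> (4 * real M) ^ r" by (rule binomial_mult_self_power_le)
  also have "\<dots> \<le> (a / 2 * real r) ^ r" using assms by (intro power_mono) auto
  also have "\<dots> = (a / 2) ^ r * real r ^ r" by (rule power_mult_distrib)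
  finally show ?thesis using False by simp
qed simp

lemma real_choose_two: "real (n choose 2) = real n * (real n - 1) / 2"
proof -
  have "even (n * (n - 1))" by (cases "even n") auto
  then have "real (n * (n - 1) div 2) = real (n * (n - 1)) / 2" by (simp add: real_of_nat_div)
  then show ?thesis by (cases n) (simp_all add: choose_two algebra_simps)
qed

definition k_cliques :: "graph \<Rightarrow> nat \<Rightarrow> nat set set" where
  "k_cliques G k = {K. is_clique G K \<and> card K = k}"

lemma card_k_cliques_le: "finite (fst G) \<Longrightarrow> card (k_cliques G k) \<le> card (fst G) choose k"
  unfolding n_subsets[symmetric] k_cliques_def is_clique_def
  by (rule card_mono) (auto intro: finite_subset[of _ "Pow (fst G)"])

lemma card_k_cliques_le_aggregator:
  assumes fin: "finite (fst G)"
    and sparse: "\<forall>S\<subseteq>fst G. m \<le> card S \<longrightarrow> density G S < \<rho>"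
    and agg: "dense_aggregator \<rho> G Ss"
  shows "card (k_cliques G k) \<le> length Ss * (m choose k)"
proof -
  have S: "finite S" "card S < m" if "S \<in> set Ss" for S
    using agg that sparse fin unfolding dense_aggregator_def
    by (auto intro: finite_subset simp: not_le[symmetric])
  have "k_cliques G k \<subseteq> (\<Union>S\<in>set Ss. {K. K \<subseteq> S \<and> card K = k})"
    using agg unfolding dense_aggregator_def k_cliques_def by blast
  then have "card (k_cliques G k) \<le> card (\<Union>S\<in>set Ss. {K. K \<subseteq> S \<and> card K = k})"
    by (rule card_mono[rotated]) (auto intro: finite_subset[of _ "Pow _"] S(1))
  also have "\<dots> \<le> (\<Sum>S\<in>set Ss. card {K. K \<subseteq> S \<and> card K = k})"
    by (rule card_UN_le) simp
  also have "\<dots> \<le> card (set Ss) * (m choose k)"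
    using sum_bounded_above[of "set Ss" "\<lambda>S. card {K. K \<subseteq> S \<and> card K = k}" "m choose k"]
    by (simp add: n_subsets S binomial_right_mono less_imp_le)
  also have "\<dots> \<le> length Ss * (m choose k)"
    by (simp add: card_length)
  finally show ?thesis .
qed

definition two_subsets :: "nat set \<Rightarrow> nat set set" where
  "two_subsets A = {e. e \<subseteq> A \<and> card e = 2}"

text \<open>A colouring with \<open>b\<close> colours stands for the random graph \<open>G(n, 1/b)\<close> formed by its pairs
  of colour \<open>0\<close>; probabilities are replaced by counting colourings.\<close>

definition colourings :: "nat \<Rightarrow> nat \<Rightarrow> (nat set \<Rightarrow> nat) set" where
  "colourings n b = (\<Pi>\<^sub>E e\<in>two_subsets {0..<n}. {..<b})"

definition colour_graph :: "nat \<Rightarrow> (nat set \<Rightarrow> nat) \<Rightarrow> graph" where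
  "colour_graph n f = ({0..<n}, {e \<in> two_subsets {0..<n}. f e = 0})"

definition dense_colourings :: "nat \<Rightarrow> nat \<Rightarrow> nat \<Rightarrow> real \<Rightarrow> (nat set \<Rightarrow> nat) set" where
  "dense_colourings n b m \<rho> =
     {f \<in> colourings n b. \<exists>S\<subseteq>{0..<n}. m \<le> card S \<and> \<rho> \<le> density (colour_graph n f) S}"

lemma finite_two_subsets: "finite A \<Longrightarrow> finite (two_subsets A)"
  unfolding two_subsets_def by (rule finite_subset[of _ "Pow A"]) auto

lemma card_two_subsets: "finite A \<Longrightarrow> card (two_subsets A) = card A choose 2"
  unfolding two_subsets_def by (rule n_subsets)

lemma two_subsets_mono: "A \<subseteq> B \<Longrightarrow> two_subsets A \<subseteq> two_subsets B"
  unfolding two_subsets_def by auto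

lemma finite_colourings: "finite (colourings n b)"
  unfolding colourings_def by (intro finite_PiE finite_two_subsets) auto

lemma card_colourings: "card (colourings n b) = b ^ card (two_subsets {0..<n})"
  unfolding colourings_def by (simp add: card_PiE finite_two_subsets)

lemma simple_graph_colour_graph: "simple_graph (colour_graph n f)"
  unfolding simple_graph_def colour_graph_def two_subsets_def by auto

lemma card_fst_colour_graph: "card (fst (colour_graph n f)) = n"
  unfolding colour_graph_def by simp

lemma is_clique_colour_graph:
  "is_clique (colour_graph n f) K \<longleftrightarrow> K \<subseteq> {0..<n} \<and> (\<forall>e\<in>two_subsets K. f e = 0)"
proof
  assume K: "is_clique (colour_graph n f) K"
  have "f e = 0" if e: "e \<in> two_subsets K" for e
  proof -
    obtain u v where "e = {u, v}" "u \<noteq> v"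
      using e unfolding two_subsets_def by (auto simp: card_2_iff)
    then show ?thesis
      using K e unfolding is_clique_def colour_graph_def two_subsets_def by auto
  qed
  then show "K \<subseteq> {0..<n} \<and> (\<forall>e\<in>two_subsets K. f e = 0)"
    using K unfolding is_clique_def colour_graph_def by auto
next
  assume "K \<subseteq> {0..<n} \<and> (\<forall>e\<in>two_subsets K. f e = 0)"
  then show "is_clique (colour_graph n f) K"
    unfolding is_clique_def colour_graph_def two_subsets_def by (auto simp: card_insert_if)
qed

lemma induced_edges_colour_graph:
  "S \<subseteq> {0..<n} \<Longrightarrow> induced_edges (colour_graph n f) S = card {e \<in> two_subsets S. f e = 0}"
  unfolding induced_edges_def colour_graph_def two_subsets_def
  by (rule arg_cong[where f = card]) auto

lemma card_colourings_vanishing_on: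
  assumes T: "T \<subseteq> two_subsets {0..<n}" and b: "b \<ge> 1"
  shows "card {f \<in> colourings n b. \<forall>e\<in>T. f e = 0} = b ^ (card (two_subsets {0..<n}) - card T)"
proof -
  let ?P = "two_subsets {0..<n}"
  have fin: "finite ?P" by (simp add: finite_two_subsets)
  have "{f \<in> colourings n b. \<forall>e\<in>T. f e = 0} = (\<Pi>\<^sub>E e\<in>?P. if e \<in> T then {0} else {..<b})"
    using T b unfolding colourings_def by (auto simp: PiE_iff extensional_def split: if_splits)
  also have "card \<dots> = (\<Prod>e\<in>?P - T. b)"
    using fin by (simp add: card_PiE if_distrib prod.If_cases Diff_eq cong: if_cong)
  also have "\<dots> = b ^ (card ?P - card T)"
    using fin T by (simp add: card_Diff_subset finite_subset)
  finally show ?thesis .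
qed

lemma sum_card_k_cliques:
  assumes b: "b \<ge> 1"
  shows "(\<Sum>f\<in>colourings n b. card (k_cliques (colour_graph n f) k)) =
         (n choose k) * b ^ (card (two_subsets {0..<n}) - (k choose 2))"
proof -
  let ?Ks = "{K. K \<subseteq> {0..<n} \<and> card K = k}"
  let ?mono = "\<lambda>f K. \<forall>e\<in>two_subsets K. f e = 0"
  have fin: "finite ?Ks" by (rule finite_subset[of _ "Pow {0..<n}"]) auto
  have "(\<Sum>f\<in>colourings n b. card (k_cliques (colour_graph n f) k)) =
        (\<Sum>f\<in>colourings n b. \<Sum>K\<in>?Ks. if ?mono f K then 1 else 0)"
  proof (rule sum.cong[OF refl])
    fix f
    have "k_cliques (colour_graph n f) k = {K \<in> ?Ks. ?mono f K}"
      unfolding k_cliques_def is_clique_colour_graph by auto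
    then show "card (k_cliques (colour_graph n f) k) = (\<Sum>K\<in>?Ks. if ?mono f K then 1 else 0)"
      by (simp only:) (subst card_eq_sum, rule sum.inter_filter[OF fin])
  qed
  also have "\<dots> = (\<Sum>K\<in>?Ks. card {f \<in> colourings n b. ?mono f K})"
    by (subst sum.swap, rule sum.cong[OF refl], subst card_eq_sum)
      (rule sum.inter_filter[OF finite_colourings, symmetric])
  also have "\<dots> = (\<Sum>K\<in>?Ks. b ^ (card (two_subsets {0..<n}) - (k choose 2)))"
  proof (rule sum.cong[OF refl])
    fix K assume K: "K \<in> ?Ks"
    then have "card (two_subsets K) = k choose 2"
      by (auto simp: card_two_subsets finite_subset)
    with K b show "card {f \<in> colourings n b. ?mono f K} = b ^ (card (two_subsets {0..<n}) - (k choose 2))"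
      using two_subsets_mono[of K "{0..<n}"] by (subst card_colourings_vanishing_on) auto
  qed
  finally show ?thesis by (simp add: n_subsets)
qed

lemma dense_colourings_subset:
  assumes m: "m \<ge> 2"
  shows "dense_colourings n b m \<rho> \<subseteq>
    (\<Union>s\<in>{m..n}. \<Union>S\<in>{S. S \<subseteq> {0..<n} \<and> card S = s}.
       \<Union>T\<in>{T. T \<subseteq> two_subsets S \<and> card T = nat \<lceil>\<rho> * real (s choose 2)\<rceil>}.
         {f \<in> colourings n b. \<forall>e\<in>T. f e = 0})"
    (is "_ \<subseteq> ?U")
proof
  fix f assume "f \<in> dense_colourings n b m \<rho>"
  then obtain S where f: "f \<in> colourings n b" and S: "S \<subseteq> {0..<n}" "m \<le> card S"
    and dense: "\<rho> \<le> density (colour_graph n f) S"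
    unfolding dense_colourings_def by blast
  let ?s = "card S"
  let ?E = "{e \<in> two_subsets S. f e = 0}"
  have "real (?s choose 2) > 0" using S m by simp
  then have "\<rho> * real (?s choose 2) \<le> real (card ?E)"
    using dense S m by (simp add: density_def induced_edges_colour_graph pos_le_divide_eq)
  then have "nat \<lceil>\<rho> * real (?s choose 2)\<rceil> \<le> card ?E" by linarith
  then obtain T where T: "T \<subseteq> ?E" "card T = nat \<lceil>\<rho> * real (?s choose 2)\<rceil>"
    by (rule obtain_subset_with_card_n)
  have "T \<subseteq> two_subsets S" "f \<in> {f \<in> colourings n b. \<forall>e\<in>T. f e = 0}"
    using T f by auto
  moreover have "?s \<in> {m..n}" using S card_mono[OF _ S(1)] by simp
  ultimately show "f \<in> ?U" using S(1) T(2) by blast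
qed

lemma card_dense_colourings_le:
  assumes b: "b \<ge> 1" and m: "m \<ge> 2"
  shows "card (dense_colourings n b m \<rho>) \<le>
    (\<Sum>s\<in>{m..n}. (n choose s) * ((s choose 2) choose nat \<lceil>\<rho> * real (s choose 2)\<rceil>)
       * b ^ (card (two_subsets {0..<n}) - nat \<lceil>\<rho> * real (s choose 2)\<rceil>))"
proof -
  define r where "r s = nat \<lceil>\<rho> * real (s choose 2)\<rceil>" for s :: nat
  define c where "c s = b ^ (card (two_subsets {0..<n}) - r s)" for s
  let ?Z = "\<lambda>T. {f \<in> colourings n b. \<forall>e\<in>T. f e = 0}"
  let ?Ss = "\<lambda>s. {S. S \<subseteq> {0..<n} \<and> card S = s}"
  let ?Ts = "\<lambda>S s. {T. T \<subseteq> two_subsets S \<and> card T = r s}"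
  have by_T: "card (\<Union>T\<in>?Ts S s. ?Z T) \<le> ((s choose 2) choose r s) * c s" if S: "S \<in> ?Ss s" for S s
  proof -
    have fin: "finite S" using S finite_subset by blast
    have "card (\<Union>T\<in>?Ts S s. ?Z T) \<le> (\<Sum>T\<in>?Ts S s. card (?Z T))"
      by (rule card_UN_le) (use fin in \<open>auto intro: finite_subset[of _ "Pow (two_subsets S)"]
          simp: finite_two_subsets\<close>)
    also have "\<dots> = (\<Sum>T\<in>?Ts S s. c s)"
      unfolding c_def using S two_subsets_mono[of S "{0..<n}"]
      by (intro sum.cong refl) (subst card_colourings_vanishing_on[OF _ b]; auto)
    also have "\<dots> = ((s choose 2) choose r s) * c s"
      using S fin by (simp add: n_subsets card_two_subsets finite_two_subsets)
    finally show ?thesis .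
  qed
  have by_S: "card (\<Union>S\<in>?Ss s. \<Union>T\<in>?Ts S s. ?Z T) \<le> (n choose s) * (((s choose 2) choose r s) * c s)" for s
  proof -
    have "card (\<Union>S\<in>?Ss s. \<Union>T\<in>?Ts S s. ?Z T) \<le> (\<Sum>S\<in>?Ss s. card (\<Union>T\<in>?Ts S s. ?Z T))"
      by (rule card_UN_le) (rule finite_subset[of _ "Pow {0..<n}"], auto)
    also have "\<dots> \<le> card (?Ss s) * (((s choose 2) choose r s) * c s)"
      using sum_bounded_above[of "?Ss s", OF by_T] by simp
    finally show ?thesis by (simp add: n_subsets)
  qed
  have "dense_colourings n b m \<rho> \<subseteq> (\<Union>s\<in>{m..n}. \<Union>S\<in>?Ss s. \<Union>T\<in>?Ts S s. ?Z T)"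
    using dense_colourings_subset[OF m] unfolding r_def .
  then have "card (dense_colourings n b m \<rho>) \<le> card (\<Union>s\<in>{m..n}. \<Union>S\<in>?Ss s. \<Union>T\<in>?Ts S s. ?Z T)"
    by (rule card_mono[rotated]) (rule finite_subset[OF _ finite_colourings[of n b]], blast)
  also have "\<dots> \<le> (\<Sum>s\<in>{m..n}. card (\<Union>S\<in>?Ss s. \<Union>T\<in>?Ts S s. ?Z T))"
    by (rule card_UN_le) simp
  also have "\<dots> \<le> (\<Sum>s\<in>{m..n}. (n choose s) * (((s choose 2) choose r s) * c s))"
    by (rule sum_mono) (rule by_S)
  finally show ?thesis unfolding r_def c_def by (simp add: mult.assoc)
qed

lemma exists_colouring_many_k_cliques:
  assumes b: "b \<ge> 1" and kn: "k \<le> n"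
    and few: "2 * b ^ (k choose 2) * card (dense_colourings n b m \<rho>) < card (colourings n b)"
  shows "\<exists>f\<in>colourings n b - dense_colourings n b m \<rho>.
           n choose k \<le> 2 * b ^ (k choose 2) * card (k_cliques (colour_graph n f) k)"
proof (rule ccontr)
  let ?O = "colourings n b" and ?B = "dense_colourings n b m \<rho>"
  let ?X = "\<lambda>f. 2 * b ^ (k choose 2) * card (k_cliques (colour_graph n f) k)"
  let ?C = "n choose k"
  assume "\<not> ?thesis"
  then have "?X f \<le> ?C" if "f \<in> ?O - ?B" for f
    using that by force
  then have "(\<Sum>f\<in>?O - ?B. ?X f) \<le> card (?O - ?B) * ?C"
    using sum_bounded_above[of "?O - ?B" ?X ?C] by simp
  also have "\<dots> \<le> card ?O * ?C"
    by (simp add: card_mono finite_colourings)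
  finally have good: "(\<Sum>f\<in>?O - ?B. ?X f) \<le> card ?O * ?C" .
  have "?X f \<le> 2 * b ^ (k choose 2) * ?C" for f
    using card_k_cliques_le[of "colour_graph n f" k] by (simp add: colour_graph_def)
  then have "(\<Sum>f\<in>?B. ?X f) \<le> card ?B * (2 * b ^ (k choose 2) * ?C)"
    using sum_bounded_above[of ?B ?X] by simp
  also have "\<dots> < card ?O * ?C"
    using few kn by (simp add: ac_simps)
  finally have bad: "(\<Sum>f\<in>?B. ?X f) < card ?O * ?C" .
  have BO: "?B \<subseteq> ?O" unfolding dense_colourings_def by auto
  have "k choose 2 \<le> card (two_subsets {0..<n})"
    using kn by (simp add: card_two_subsets binomial_right_mono)
  then have "(\<Sum>f\<in>?O. ?X f) = 2 * (card ?O * ?C)"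
    using sum_card_k_cliques[OF b, of n k]
    by (simp add: sum_distrib_left[symmetric] card_colourings power_add[symmetric])
  moreover have "(\<Sum>f\<in>?O. ?X f) = (\<Sum>f\<in>?O - ?B. ?X f) + (\<Sum>f\<in>?B. ?X f)"
    by (rule sum.subset_diff[OF BO finite_colourings])
  ultimately show False using good bad by linarith
qed

lemma exists_graph_large_aggregators:
  assumes b: "b \<ge> 1" and kn: "k \<le> n" and m: "m \<ge> 2"
    and few: "2 * b ^ (k choose 2) * card (dense_colourings n b m \<rho>\<^sub>0) < card (colourings n b)"
  shows "\<exists>G. simple_graph G \<and> card (fst G) = n \<and>
    (\<forall>\<rho> Ss. \<rho>\<^sub>0 \<le> \<rho> \<longrightarrow> dense_aggregator \<rho> G Ss \<longrightarrow>
       n choose k \<le> 2 * b ^ (k choose 2) * (m choose k) * length Ss)"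
proof -
  obtain f where f: "f \<in> colourings n b" "f \<notin> dense_colourings n b m \<rho>\<^sub>0"
    and many: "n choose k \<le> 2 * b ^ (k choose 2) * card (k_cliques (colour_graph n f) k)"
    using exists_colouring_many_k_cliques[OF b kn few] by blast
  let ?G = "colour_graph n f"
  have "n choose k \<le> 2 * b ^ (k choose 2) * (m choose k) * length Ss"
    if \<rho>: "\<rho>\<^sub>0 \<le> \<rho>" and agg: "dense_aggregator \<rho> ?G Ss" for \<rho> Ss
  proof -
    have "density ?G S < \<rho>" if S: "S \<subseteq> fst ?G" "m \<le> card S" for S
    proof -
      have "S \<subseteq> {0..<n}" using S(1) by (simp add: colour_graph_def)
      then have "\<not> \<rho>\<^sub>0 \<le> density ?G S" using f S(2) unfolding dense_colourings_def by blast
      then show ?thesis using \<rho> by linarith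
    qed
    then have cliques: "card (k_cliques ?G k) \<le> length Ss * (m choose k)"
      by (intro card_k_cliques_le_aggregator[OF _ _ agg]) (auto simp: colour_graph_def)
    note many
    also have "2 * b ^ (k choose 2) * card (k_cliques ?G k) \<le> 2 * b ^ (k choose 2) * (length Ss * (m choose k))"
      using cliques by (rule mult_le_mono2)
    finally show ?thesis by (simp add: algebra_simps)
  qed
  then show ?thesis
    using simple_graph_colour_graph card_fst_colour_graph by blast
qed

lemma dense_colourings_term_le:
  fixes a s :: nat
  assumes a: "a \<ge> 2" and s: "a ^ 2 \<le> s" "s \<le> 2 ^ a"
  shows "real (2 ^ a choose s) * real ((s choose 2) choose nat \<lceil>8 / real a * real (s choose 2)\<rceil>)
           * real (a ^ (card (two_subsets {0..<2 ^ a}) - nat \<lceil>8 / real a * real (s choose 2)\<rceil>))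
         \<le> real a ^ card (two_subsets {0..<2 ^ a}) / 2 ^ (a * s)"
proof -
  define M where "M = s choose 2"
  define r where "r = nat \<lceil>8 / real a * real M\<rceil>"
  define P where "P = card (two_subsets {0..<2 ^ a})"
  have a0: "real a > 0" using a by simp
  have "8 / real a * real M \<le> real r"
    unfolding r_def by linarith
  then have r: "8 * real M \<le> real a * real r"
    using a0 by (simp add: field_simps)
  have choose_r: "real (M choose r) * real (a ^ (P - r)) \<le> real a ^ P / 2 ^ r"
  proof (cases "r \<le> P")
    case True
    have "real (M choose r) \<le> (real a / 2) ^ r"
      using r by (intro binomial_le_half_power) auto
    then have "real (M choose r) * real (a ^ (P - r)) \<le> (real a / 2) ^ r * real a ^ (P - r)"
      by (simp add: mult_right_mono)
    also have "\<dots> = real a ^ P / 2 ^ r"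
      using True a0 by (simp add: power_divide power_diff)
    finally show ?thesis .
  next
    case False
    have "M \<le> 2 ^ a choose 2" unfolding M_def using s by (simp add: binomial_right_mono)
    then have "M < r" using False by (simp add: P_def card_two_subsets)
    then show ?thesis by (simp add: binomial_eq_0)
  qed
  have choose_s: "real (2 ^ a choose s) \<le> 2 ^ (a * s)"
  proof -
    have "real (2 ^ a choose s) \<le> real ((2 ^ a) ^ s)"
      using s(2) by (simp only: of_nat_le_iff binomial_le_pow)
    then show ?thesis by (simp add: power_mult)
  qed
  have r_large: "2 * a * s \<le> r"
  proof -
    have "a * a \<le> s" "4 \<le> a * a"
      using s(1) a mult_le_mono[of 2 a 2 a] by (auto simp: power2_eq_square)
    then have "a * a + 2 \<le> 2 * s" by linarith
    then have "real a * real a \<le> 2 * (real s - 1)"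
      by (simp flip: of_nat_mult of_nat_le_iff)
    then have "2 * real s * (real a * real a) \<le> 2 * real s * (2 * (real s - 1))"
      by (intro mult_left_mono) auto
    then have "2 * a * s * real a \<le> 4 * real s * (real s - 1)"
      by (simp add: algebra_simps)
    also have "\<dots> = 8 * real M" unfolding M_def real_choose_two by simp
    also have "\<dots> \<le> real r * real a" using r by (simp add: ac_simps)
    finally show ?thesis using a0 by (simp only: mult_le_cancel_right of_nat_le_iff)
  qed
  have "real (2 ^ a choose s) * real (M choose r) * real (a ^ (P - r))
        \<le> 2 ^ (a * s) * (real a ^ P / 2 ^ r)"
    unfolding mult.assoc[of "real (2 ^ a choose s)"] using choose_s choose_r by (rule mult_mono) auto
  also have "\<dots> \<le> 2 ^ (a * s) * (real a ^ P / 2 ^ (2 * a * s))"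
    using r_large by (intro mult_left_mono divide_left_mono power_increasing) auto
  also have "\<dots> = real a ^ P / 2 ^ (a * s)"
    by (simp add: power_add mult_2 add_mult_distrib)
  finally show ?thesis unfolding M_def r_def P_def .
qed

lemma card_dense_colourings_tower_le:
  assumes a: "a \<ge> 2"
  shows "real (card (dense_colourings (2 ^ a) a (a ^ 2) (8 / real a)))
         \<le> (2 ^ a + 1) * real a ^ card (two_subsets {0..<2 ^ a}) / 2 ^ (a * a ^ 2)"
proof -
  let ?r = "\<lambda>s. nat \<lceil>8 / real a * real (s choose 2)\<rceil>"
  let ?P = "card (two_subsets {0..<2 ^ a})"
  have "a ^ 2 \<ge> 2" using a power_increasing[of 1 2 a] by simp
  then have "card (dense_colourings (2 ^ a) a (a ^ 2) (8 / real a))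
    \<le> (\<Sum>s\<in>{a ^ 2..2 ^ a}. (2 ^ a choose s) * ((s choose 2) choose ?r s) * a ^ (?P - ?r s))"
    using a by (intro card_dense_colourings_le) auto
  then have "real (card (dense_colourings (2 ^ a) a (a ^ 2) (8 / real a)))
    \<le> (\<Sum>s\<in>{a ^ 2..2 ^ a}. real (2 ^ a choose s) * real ((s choose 2) choose ?r s) * real (a ^ (?P - ?r s)))"
    by (simp only: of_nat_le_iff flip: of_nat_sum of_nat_mult)
  also have "\<dots> \<le> (\<Sum>s\<in>{a ^ 2..2 ^ a}. real a ^ ?P / 2 ^ (a * a ^ 2))"
  proof (rule sum_mono)
    fix s assume s: "s \<in> {a ^ 2..2 ^ a}"
    then have "real a ^ ?P / 2 ^ (a * s) \<le> real a ^ ?P / 2 ^ (a * a ^ 2)"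
      by (intro divide_left_mono power_increasing) auto
    with s show "real (2 ^ a choose s) * real ((s choose 2) choose ?r s) * real (a ^ (?P - ?r s))
                 \<le> real a ^ ?P / 2 ^ (a * a ^ 2)"
      using dense_colourings_term_le[OF a] by fastforce
  qed
  also have "\<dots> = real (card {a ^ 2..2 ^ a}) * (real a ^ ?P / 2 ^ (a * a ^ 2))"
    by simp
  also have "\<dots> \<le> real (2 ^ a + 1) * (real a ^ ?P / 2 ^ (a * a ^ 2))"
    by (intro mult_right_mono) (simp_all only: of_nat_le_iff, auto)
  finally show ?thesis by (simp add: ac_simps)
qed

lemma few_dense_colourings_tower:
  assumes j: "j \<ge> 2" and a: "a = j * k" "a = 2 ^ j"
  shows "2 * a ^ (k choose 2) * card (dense_colourings (2 ^ a) a (a ^ 2) (8 / real a))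
         < card (colourings (2 ^ a) a)"
proof -
  let ?P = "card (two_subsets {0..<2 ^ a})"
  let ?D = "dense_colourings (2 ^ a) a (a ^ 2) (8 / real a)"
  have "(2::nat) ^ 2 \<le> 2 ^ j" using j by (rule power_increasing) simp
  then have a4: "a \<ge> 4" using a(2) by simp
  have "j * (k choose 2) \<le> a * a"
  proof -
    have "j * (k choose 2) \<le> j * (k * k)"
      using binomial_le_pow[of 2 k] by (cases "k \<ge> 2") (auto simp: power2_eq_square binomial_eq_0)
    also have "\<dots> \<le> a * a" using a j by simp
    finally show ?thesis .
  qed
  then have "real a ^ (k choose 2) \<le> 2 ^ (a * a)"
    using a(2) by (simp add: power_mult[symmetric] power_increasing)
  then have "2 * real a ^ (k choose 2) * (2 ^ a + 1) \<le> 2 * 2 ^ (a * a) * (2 * 2 ^ a)"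
    by (intro mult_mono) auto
  also have "\<dots> = 2 ^ (a * a + a + 2)" by (simp add: power_add)
  also have "\<dots> < 2 ^ (a * a ^ 2)"
  proof (rule power_strict_increasing)
    have "4 * (a * a) \<le> a * (a * a)" "4 * a \<le> a * a" using a4 by simp_all
    then show "a * a + a + 2 < a * a ^ 2" unfolding power2_eq_square using a4 by linarith
  qed simp
  finally have key: "2 * real a ^ (k choose 2) * (2 ^ a + 1) / 2 ^ (a * a ^ 2) < 1"
    by simp
  have "real (2 * a ^ (k choose 2) * card ?D) = 2 * real a ^ (k choose 2) * real (card ?D)"
    by simp
  also have "\<dots> \<le> 2 * real a ^ (k choose 2) * ((2 ^ a + 1) * real a ^ ?P / 2 ^ (a * a ^ 2))"
    using card_dense_colourings_tower_le[of a] a4 by (intro mult_left_mono) auto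
  also have "\<dots> = (2 * real a ^ (k choose 2) * (2 ^ a + 1) / 2 ^ (a * a ^ 2)) * real a ^ ?P"
    by simp
  also have "\<dots> < real a ^ ?P"
    using mult_strict_right_mono[OF key, of "real a ^ ?P"] a4 by simp
  also have "\<dots> = real (card (colourings (2 ^ a) a))"
    by (simp add: card_colourings)
  finally show ?thesis by (simp only: of_nat_less_iff)
qed

lemma many_k_cliques_tower:
  fixes j k a :: nat
  assumes j: "j \<ge> 2" and k: "k \<ge> 32" and a: "a = j * k" "a = 2 ^ j"
  shows "2 powr (3 * real a * real k / 8) * real (2 * a ^ (k choose 2) * (a ^ 2 choose k))
         \<le> real (2 ^ a choose k)"
proof -
  define X where "X = 3 * real a * real k / 8"
  define E where "E = 1 + j * (k choose 2) + 2 * k + 2 * (j * k)"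
  have exponent: "X + real E \<le> real (a * k)"
  proof -
    have "2 * (k choose 2) \<le> k * (k - 1)" unfolding choose_two by simp
    also have "\<dots> \<le> k * k" by simp
    finally have "j * (2 * (k choose 2)) \<le> j * (k * k)" by (rule mult_le_mono2)
    moreover have "32 * (j * k) \<le> j * (k * k)" "2 * k \<le> j * k" using j k by simp_all
    ultimately have "3 * (j * (k * k)) + 8 * E \<le> 8 * (j * (k * k))"
      unfolding E_def distrib_left using k by linarith
    then have "real (3 * (j * (k * k)) + 8 * E) \<le> real (8 * (j * (k * k)))"
      by (simp only: of_nat_le_iff)
    then show ?thesis
      unfolding X_def a(1) by simp
  qed
  have "real a ^ (k choose 2) = 2 ^ (j * (k choose 2))"
    using a(2) by (simp add: power_mult)
  moreover have "(4 * real (a ^ 2)) ^ k = 2 ^ (2 * (j + 1) * k)"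
  proof -
    have "4 * real (a ^ 2) = 2 ^ (2 * (j + 1))"
      using a(2) by (simp add: power_even_eq power_add)
    then show ?thesis by (simp only: power_mult)
  qed
  ultimately have pow: "2 * real a ^ (k choose 2) * (4 * real (a ^ 2)) ^ k = 2 ^ E"
    unfolding E_def by (simp add: power_add algebra_simps)
  have "2 powr X * real (2 * a ^ (k choose 2) * (a ^ 2 choose k)) * real k ^ k
        \<le> 2 powr X * (2 * real a ^ (k choose 2) * (4 * real (a ^ 2)) ^ k)"
    using binomial_mult_self_power_le[of "a ^ 2" k] by (simp add: mult_left_mono)
  also have "\<dots> = 2 powr (X + real E)"
    using pow by (simp add: powr_add powr_realpow)
  also have "\<dots> \<le> 2 powr real (a * k)"
    using exponent by simp
  also have "\<dots> = 2 ^ (a * k)"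
    by (rule powr_realpow) simp
  also have "\<dots> = real (2 ^ a) ^ k"
    by (simp add: power_mult)
  finally have "2 powr X * real (2 * a ^ (k choose 2) * (a ^ 2 choose k)) \<le> (real (2 ^ a) / real k) ^ k"
    using k by (simp add: power_divide le_divide_eq)
  also have "\<dots> \<le> real (2 ^ a choose k)"
  proof (rule binomial_ge_n_over_k_pow_k)
    have "k \<le> a" using a(1) j by simp
    also have "a < 2 ^ a" by (rule less_exp)
    finally show "k \<le> 2 ^ a" by simp
  qed
  finally show ?thesis unfolding X_def .
qed

lemma tower_graph_large_aggregators:
  fixes j k a :: nat
  assumes j: "j \<ge> 2" and k: "k \<ge> 32" and a: "a = j * k" "a = 2 ^ j"
  shows "\<exists>G. simple_graph G \<and> card (fst G) = 2 ^ a \<and>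
    (\<forall>\<rho> Ss. 8 / real a \<le> \<rho> \<longrightarrow> dense_aggregator \<rho> G Ss \<longrightarrow>
       2 powr (3 * real a * real k / 8) \<le> real (length Ss))"
proof -
  let ?D = "2 * a ^ (k choose 2) * (a ^ 2 choose k)"
  have ka: "k \<le> a" using a(1) j by simp
  have a_sq: "a \<le> a ^ 2" by (simp add: power2_eq_square)
  have "a \<ge> 2" using ka k by simp
  moreover have "k \<le> 2 ^ a" using ka less_exp[of a] by linarith
  moreover have "a ^ 2 \<ge> 2" using ka k a_sq by simp
  ultimately obtain G where G: "simple_graph G" "card (fst G) = 2 ^ a"
    and bound: "\<And>\<rho> Ss. 8 / real a \<le> \<rho> \<Longrightarrow> dense_aggregator \<rho> G Ss \<Longrightarrow>
                  2 ^ a choose k \<le> ?D * length Ss"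
    using exists_graph_large_aggregators[of a k "2 ^ a" "a ^ 2" "8 / real a"]
      few_dense_colourings_tower[OF j a] by auto
  have "2 powr (3 * real a * real k / 8) \<le> real (length Ss)"
    if "8 / real a \<le> \<rho>" "dense_aggregator \<rho> G Ss" for \<rho> Ss
  proof -
    have "2 powr (3 * real a * real k / 8) * real ?D \<le> real (2 ^ a choose k)"
      by (rule many_k_cliques_tower[OF j k a])
    also have "\<dots> \<le> real (?D * length Ss)"
      using bound[OF that] by (simp only: of_nat_le_iff)
    also have "\<dots> = real (length Ss) * real ?D"
      by simp
    finally have "2 powr (3 * real a * real k / 8) * real ?D \<le> real (length Ss) * real ?D" .
    moreover have "real ?D > 0" using ka a_sq k by simp
    ultimately show ?thesis by (rule mult_right_le_imp_le)
  qed
  with G show ?thesis by blast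
qed

lemma tower_exponent:
  fixes j k a :: nat
  assumes "j > 0" and a: "a = j * k" "a = 2 ^ j"
  shows "real (2 ^ a) powr (3 * log 2 (real (2 ^ a)) / (8 * log 2 (log 2 (real (2 ^ a)))))
         = 2 powr (3 * real a * real k / 8)"
proof -
  have "log 2 (real (2 ^ a)) = real a" "log 2 (real a) = real j"
    using a(2) by (simp_all add: log_nat_power)
  then have "real (2 ^ a) powr (3 * log 2 (real (2 ^ a)) / (8 * log 2 (log 2 (real (2 ^ a)))))
             = 2 powr (real a * (3 * real a / (8 * real j)))"
    by (simp add: powr_powr powr_realpow[symmetric])
  also have "real a * (3 * real a / (8 * real j)) = 3 * real a * real k / 8"
    using a(1) assms(1) by (simp add: field_simps)
  finally show ?thesis .
qed

lemma exists_graph_tower_large_aggregators: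
  fixes i :: nat
  shows "\<exists>G. simple_graph G \<and> card (fst G) = 2 ^ 2 ^ 2 ^ (i + 3) \<and>
    (\<forall>\<rho> Ss. let n = card (fst G) in
       8 / log 2 (real n) \<le> \<rho> \<longrightarrow> dense_aggregator \<rho> G Ss \<longrightarrow>
       real n powr (3 * log 2 (real n) / (8 * log 2 (log 2 (real n)))) \<le> real (length Ss))"
proof -
  define j :: nat where "j = 2 ^ (i + 3)"
  \<comment> \<open>\<open>j\<close> is a power of two, so that \<open>k = 2^j / j\<close> is an integer\<close>
  define k :: nat where "k = 2 ^ (j - (i + 3))"
  define a :: nat where "a = 2 ^ j"
  have "i + 1 \<le> 2 ^ i" using less_exp[of i] by linarith
  then have ij: "i + 8 \<le> j" unfolding j_def by (simp add: power_add)
  have j: "j \<ge> 2" using ij by simp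
  have "(2::nat) ^ 5 \<le> k" unfolding k_def using ij by (intro power_increasing) auto
  then have k: "k \<ge> 32" by simp
  have ajk: "a = j * k"
    unfolding a_def j_def k_def using ij by (simp add: power_add[symmetric] j_def)
  obtain G where G: "simple_graph G" "card (fst G) = 2 ^ a"
    and bound: "\<forall>\<rho> Ss. 8 / real a \<le> \<rho> \<longrightarrow> dense_aggregator \<rho> G Ss \<longrightarrow>
                  2 powr (3 * real a * real k / 8) \<le> real (length Ss)"
    using tower_graph_large_aggregators[OF j k ajk a_def] by blast
  have "j > 0" using j by simp
  note exponent = tower_exponent[OF this ajk a_def]
  have log_n: "log 2 (real (2 ^ a)) = real a"
    by (simp add: log_nat_power)
  show ?thesis
  proof (intro exI conjI)
    show "card (fst G) = 2 ^ 2 ^ 2 ^ (i + 3)" using G(2) unfolding a_def j_def .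
    show "\<forall>\<rho> Ss. let n = card (fst G) in
       8 / log 2 (real n) \<le> \<rho> \<longrightarrow> dense_aggregator \<rho> G Ss \<longrightarrow>
       real n powr (3 * log 2 (real n) / (8 * log 2 (log 2 (real n)))) \<le> real (length Ss)"
      unfolding Let_def G(2) exponent unfolding log_n by (rule bound)
  qed (rule G(1))
qed

theorem theorem4p1:
  shows "\<exists>(c::real) > 0. \<exists>\<G> :: graph set. \<exists>s :: nat \<Rightarrow> real.
    (\<forall>G\<in>\<G>. simple_graph G) \<and>
    infinite {n. \<exists>G\<in>\<G>. card (fst G) = n} \<and>
    (\<forall>n. s n > 0) \<and> ((\<lambda>n. s n / real n) \<longlonglongrightarrow> 0) \<and>
    (\<forall>G\<in>\<G>. \<forall>\<rho>::real. \<forall>Ss. let n = card (fst G) in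
       \<rho> \<ge> c / log 2 (real n) \<longrightarrow> dense_aggregator \<rho> G Ss \<longrightarrow>
       real (length Ss) \<ge>
         real n powr (3 * log 2 (real n) / (8 * log 2 (log 2 (real n)))) / s n)"
proof -
  define \<G> where "\<G> = {G. simple_graph G \<and> (\<forall>\<rho> Ss. let n = card (fst G) in
       8 / log 2 (real n) \<le> \<rho> \<longrightarrow> dense_aggregator \<rho> G Ss \<longrightarrow>
       real n powr (3 * log 2 (real n) / (8 * log 2 (log 2 (real n)))) \<le> real (length Ss))}"
  have "range (\<lambda>i. 2 ^ 2 ^ 2 ^ (i + 3)) \<subseteq> {n. \<exists>G\<in>\<G>. card (fst G) = n}"
    using exists_graph_tower_large_aggregators unfolding \<G>_def by fastforce
  moreover have "infinite (range (\<lambda>i::nat. 2 ^ 2 ^ 2 ^ (i + 3) :: nat))"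
    by (rule range_inj_infinite) (simp add: inj_def)
  ultimately have sizes: "infinite {n. \<exists>G\<in>\<G>. card (fst G) = n}"
    using infinite_super by blast
  show ?thesis
  proof (intro exI[of _ "8::real"] exI[of _ \<G>] exI[of _ "\<lambda>_. 1 :: real"] conjI)
    show "(\<lambda>n. 1 / real n) \<longlonglongrightarrow> 0" by (rule lim_1_over_n)
  qed (use sizes in \<open>auto simp: \<G>_def\<close>)
qed

end
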